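(* Let $\Gamma\subset\mathbf{Z}^n$ be an almost periodic pattern, $\varepsilon>0$ and $\ell\in\mathbf{N}^*$. Set $\varepsilon'=\varepsilon/\ell$ and let $R_{\varepsilon'}>0$ and a relatively dense set $\mathcal N_{\varepsilon'}$ be such that $D_R^+((\Gamma+v)\Delta\Gamma)<\varepsilon'$ for all $R\ge R_{\varepsilon'}$ and all $v\in\mathcal N_{\varepsilon'}$. Then for every $k\in\{1,\dots,\ell\}$ and every $v_1,\dots,v_k\in\mathcal N_{\varepsilon'}$, $\forall R\ge R_{\varepsilon'},\quad D_R^+\Big(\big(\Gamma+\sum_{i=1}^k v_i\big)\Delta\Gamma\Big)<\varepsilon.$
   Context: Balls are for the sup norm: $B(x,R)=\{y:\max_i|x_i-y_i|<R\}$. Relatively dense: there is $R_0>0$ such that every ball of radius at least $R_0$ meets the set; uniformly discrete: there is $r>0$ such that every ball of radius at most $r$ contains at most one point; Delone: both. $D_R^+(\Gamma)=\sup_{x\in\mathbf{R}^n}\frac{\operatorname{Card}(B(x,R)\cap\Gamma)}{\operatorname{Card}(B(x,R)\cap\mathbf{Z}^n)}$. A Delone set $\Gamma\subset\mathbf{Z}^n$ is an almost periodic pattern if for every $\varepsilon>0$ there exist $R_\varepsilon>0$ and a relatively dense set $\mathcal N_\varepsilon$ with $D_R^+((\Gamma+v)\Delta\Gamma)<\varepsilon$ for all $R\ge R_\varepsilon$, $v\in\mathcal N_\varepsilon$. *)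

theory Defs
  imports "HOL-Analysis.Analysis"
begin

text \<open>Points of Z^n are vectors int ^ 'n; balls are sup-norm balls centred at an
arbitrary point x of R^n (real ^ 'n). zball x R is B(x,R) \<inter> Z^n.\<close>

definition zball :: "real ^ 'n \<Rightarrow> real \<Rightarrow> (int ^ 'n) set" where
  "zball x R = {y. \<forall>i. \<bar>x $ i - real_of_int (y $ i)\<bar> < R}"

definition upper_density :: "real \<Rightarrow> (int ^ 'n) set \<Rightarrow> real" where
  "upper_density R A =
     Sup {real (card (zball x R \<inter> A)) / real (card (zball x R)) | x. True}"

definition rel_dense :: "(int ^ 'n) set \<Rightarrow> bool" where
  "rel_dense A \<longleftrightarrow> (\<exists>R0>0. \<forall>x R. R \<ge> R0 \<longrightarrow> zball x R \<inter> A \<noteq> {})"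

definition unif_discrete :: "(int ^ 'n) set \<Rightarrow> bool" where
  "unif_discrete A \<longleftrightarrow> (\<exists>r>0. \<forall>x R. R \<le> r \<longrightarrow>
      (\<forall>a\<in>zball x R \<inter> A. \<forall>b\<in>zball x R \<inter> A. a = b))"

definition delone :: "(int ^ 'n) set \<Rightarrow> bool" where
  "delone A \<longleftrightarrow> rel_dense A \<and> unif_discrete A"

definition translate :: "(int ^ 'n) set \<Rightarrow> int ^ 'n \<Rightarrow> (int ^ 'n) set" where
  "translate A v = (\<lambda>x. x + v) ` A"

definition symdiff :: "'a set \<Rightarrow> 'a set \<Rightarrow> 'a set" where
  "symdiff A B = (A - B) \<union> (B - A)"

definition almost_periodic_pattern :: "(int ^ 'n) set \<Rightarrow> bool" where
  "almost_periodic_pattern \<Gamma> \<longleftrightarrow> delone \<Gamma> \<and>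
     (\<forall>\<epsilon>>0. \<exists>R\<epsilon>>0. \<exists>N. rel_dense N \<and>
        (\<forall>R v. R \<ge> R\<epsilon> \<longrightarrow> v \<in> N \<longrightarrow>
            upper_density R (symdiff (translate \<Gamma> v) \<Gamma>) < \<epsilon>))"

end

theory Submission
  imports Defs
begin

text \<open>Writing s_j = v_1 + ... + v_j, the set (\<Gamma> + s_k) \<Delta> \<Gamma> is covered by the sets
  (\<Gamma> + s_j) \<Delta> (\<Gamma> + s_(j-1)), each a translate of (\<Gamma> + v_j) \<Delta> \<Gamma>. Because D_R^+ is a
  supremum over all centres of balls it does not increase under integer translation, and it is
  subadditive, so the upper density of the symmetric difference is below k \<epsilon>/l \<le> \<epsilon>.\<close>

definition zball_density :: "real \<Rightarrow> (int ^ 'n) set \<Rightarrow> real ^ 'n \<Rightarrow> real" where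
  "zball_density R A x = real (card (zball x R \<inter> A)) / real (card (zball x R))"

lemma upper_density_eq_SUP: "upper_density R A = (SUP x. zball_density R A x)"
  unfolding upper_density_def zball_density_def by (simp add: full_SetCompr_eq)

lemma finite_zball: "finite (zball x R)"
proof -
  let ?S = "\<lambda>i. {\<lfloor>x $ i - R\<rfloor> .. \<lceil>x $ i + R\<rceil>}"
  have "zball x R \<subseteq> vec_lambda ` (PiE UNIV ?S)"
  proof
    fix y assume y: "y \<in> zball x R"
    have "y $ i \<in> ?S i" for i
      using y[unfolded zball_def, simplified, rule_format, of i]
      by (auto simp: abs_less_iff floor_le_iff le_ceiling_iff)
    then have "(\<lambda>i. y $ i) \<in> PiE UNIV ?S" by auto
    then show "y \<in> vec_lambda ` (PiE UNIV ?S)" by (intro image_eqI[of _ _ "\<lambda>i. y $ i"]) auto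
  qed
  moreover have "finite (PiE UNIV ?S)" by (rule finite_PiE) auto
  ultimately show ?thesis using finite_subset by blast
qed

lemma zball_density_le_1: "zball_density R A x \<le> 1"
proof -
  have "card (zball x R \<inter> A) \<le> card (zball x R)"
    using finite_zball by (intro card_mono) auto
  then show ?thesis unfolding zball_density_def
    by (cases "card (zball x R) = 0") (auto simp: divide_le_eq_1)
qed

lemma bdd_above_zball_density: "bdd_above (range (zball_density R A))"
  using zball_density_le_1 by (intro bdd_aboveI2)

lemma zball_density_le_upper_density: "zball_density R A x \<le> upper_density R A"
  unfolding upper_density_eq_SUP by (rule cSUP_upper[OF _ bdd_above_zball_density]) simp

lemma upper_density_empty: "upper_density R {} = 0"
  unfolding upper_density_eq_SUP zball_density_def by simp

lemma upper_density_le_add_if_subset_Un: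
  assumes "A \<subseteq> B \<union> C"
  shows "upper_density R A \<le> upper_density R B + upper_density R C"
  unfolding upper_density_eq_SUP[of R A]
proof (rule cSUP_least)
  fix x
  have "card (zball x R \<inter> A) \<le> card ((zball x R \<inter> B) \<union> (zball x R \<inter> C))"
    using assms finite_zball by (intro card_mono) auto
  also have "\<dots> \<le> card (zball x R \<inter> B) + card (zball x R \<inter> C)" by (rule card_Un_le)
  finally have "zball_density R A x \<le> zball_density R B x + zball_density R C x"
    unfolding zball_density_def by (simp add: add_divide_distrib[symmetric] divide_right_mono)
  then show "zball_density R A x \<le> upper_density R B + upper_density R C"
    using zball_density_le_upper_density[of R B x] zball_density_le_upper_density[of R C x]
    by linarith
qed simp

definition of_int_vec :: "int ^ 'n \<Rightarrow> real ^ 'n" where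
  "of_int_vec w = (\<chi> i. real_of_int (w $ i))"

lemma zball_eq_translate: "zball x R = translate (zball (x - of_int_vec w) R) w"
  unfolding translate_def
proof (intro equalityI subsetI)
  fix z assume "z \<in> zball x R"
  then have "z - w \<in> zball (x - of_int_vec w) R"
    by (auto simp: zball_def of_int_vec_def algebra_simps)
  then show "z \<in> (\<lambda>y. y + w) ` zball (x - of_int_vec w) R"
    by (intro image_eqI[of _ _ "z - w"]) auto
qed (auto simp: zball_def of_int_vec_def algebra_simps)

lemma card_translate: "card (translate A w) = card A"
  unfolding translate_def by (rule card_image) (auto intro: inj_onI)

lemma zball_density_translate:
  "zball_density R (translate A w) x = zball_density R A (x - of_int_vec w)"
proof -
  have "zball x R \<inter> translate A w = translate (zball (x - of_int_vec w) R \<inter> A) w"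
    by (subst zball_eq_translate[of x R w]) (auto simp: translate_def)
  then show ?thesis
    unfolding zball_density_def card_translate
    by (subst (2) zball_eq_translate[of x R w]) (simp add: card_translate)
qed

lemma upper_density_translate_le: "upper_density R (translate A w) \<le> upper_density R A"
  unfolding upper_density_eq_SUP[of R "translate A w"] zball_density_translate
  by (rule cSUP_least) (simp_all add: zball_density_le_upper_density)

lemma symdiff_translate_add_subset:
  "symdiff (translate A (u + w)) A
     \<subseteq> translate (symdiff (translate A u) A) w \<union> symdiff (translate A w) A"
  unfolding symdiff_def translate_def by (auto simp: add.assoc image_iff)

lemma upper_density_symdiff_translate_add_le:
  "upper_density R (symdiff (translate A (u + w)) A)
     \<le> upper_density R (symdiff (translate A u) A) + upper_density R (symdiff (translate A w) A)"
  using upper_density_le_add_if_subset_Un[OF symdiff_translate_add_subset, of R A u w]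
    upper_density_translate_le[of R "symdiff (translate A u) A" w] by linarith

lemma upper_density_symdiff_translate_sum_le:
  assumes "finite I"
  shows "upper_density R (symdiff (translate A (\<Sum>i\<in>I. v i)) A)
           \<le> (\<Sum>i\<in>I. upper_density R (symdiff (translate A (v i)) A))"
  using assms
proof (induction I rule: finite_induct)
  case empty
  have "symdiff (translate A 0) A = {}" by (simp add: symdiff_def translate_def)
  then show ?case by (simp add: upper_density_empty)
next
  case (insert j I)
  then show ?case
    using upper_density_symdiff_translate_add_le[of R A "v j" "\<Sum>i\<in>I. v i"] by simp
qed

theorem lemmaA1:
  fixes \<Gamma> N :: "(int ^ 'n) set" and \<epsilon> Reps :: real and l :: nat
  assumes "almost_periodic_pattern \<Gamma>"
    and "\<epsilon> > 0" and "l \<ge> 1"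
    and "Reps > 0" and "rel_dense N"
    and "\<forall>R v. R \<ge> Reps \<longrightarrow> v \<in> N \<longrightarrow>
            upper_density R (symdiff (translate \<Gamma> v) \<Gamma>) < \<epsilon> / real l"
  shows "\<forall>k \<in> {1..l}. \<forall>v :: nat \<Rightarrow> int ^ 'n. (\<forall>i\<in>{1..k}. v i \<in> N) \<longrightarrow>
           (\<forall>R \<ge> Reps. upper_density R (symdiff (translate \<Gamma> (\<Sum>i=1..k. v i)) \<Gamma>) < \<epsilon>)"
proof (intro ballI allI impI)
  fix k v R assume k: "k \<in> {1..l}" and v: "\<forall>i\<in>{1..k}. v i \<in> N" and R: "R \<ge> Reps"
  have "upper_density R (symdiff (translate \<Gamma> (\<Sum>i=1..k. v i)) \<Gamma>)
          \<le> (\<Sum>i=1..k. upper_density R (symdiff (translate \<Gamma> (v i)) \<Gamma>))"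
    by (rule upper_density_symdiff_translate_sum_le) simp
  also have "\<dots> < (\<Sum>i=1..k. \<epsilon> / real l)"
    using k v R assms(6) by (intro sum_strict_mono) auto
  also have "\<dots> = real k * (\<epsilon> / real l)" by simp
  also have "\<dots> \<le> real l * (\<epsilon> / real l)"
    using k assms(2) by (intro mult_right_mono) auto
  also have "\<dots> = \<epsilon>" using assms(3) by simp
  finally show "upper_density R (symdiff (translate \<Gamma> (\<Sum>i=1..k. v i)) \<Gamma>) < \<epsilon>" .
qed

end
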